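(* Let $\mathcal{C}$ be an $[n,k,d]_q$ linear code with two $(r_i,\delta_i)_{i\in\{1,2\}}$ localities with respect to the sets $\mathcal{T}_1$, $\mathcal{T}_2=[n]\setminus\mathcal{T}_1$, where $n_i=|\mathcal{T}_i|$, $r_1\le r_2$ and $\delta_1\ge\delta_2\ge2$. Put $\Delta=\lceil n_1/(r_1+\delta_1-1)\rceil(\delta_1-1)$. If $r_1\lceil n_1/(r_1+\delta_1-1)\rceil\le k-1$ and $r_1\lceil(\Delta-1)/(\delta_1-1)\rceil+(\Delta-1)<n_1$, then $$d\le n-k+1-\left\lceil\frac{n_1}{r_1+\delta_1-1}\right\rceil(\delta_1-1)-\left(\left\lceil\frac{k-r_1\lceil n_1/(r_1+\delta_1-1)\rceil}{r_2}\right\rceil-1\right)(\delta_2-1).$$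
   Context: $[n]=\{1,\dots,n\}$. For an $[n,k,d]_q$ linear code with generator matrix columns $\vec g_1,\dots,\vec g_n$, a regenerating set of coordinate $i$ is a (minimal) subset $R\subseteq[n]$ with $i\in R$ such that $\vec g_i$ is an $\mathbb{F}_q$-linear combination of $\{\vec g_j\}_{j\in R\setminus\{i\}}$ and no proper subset of $R\setminus\{i\}$ suffices; $\mathcal{R}_i$ is the set of all regenerating sets of coordinate $i$. The code has two $(r_i,\delta_i)_{i\in\{1,2\}}$ localities if $\mathcal{T}_1\subseteq[n]$, $\mathcal{T}_2=[n]\setminus\mathcal{T}_1$, $r_1\le r_2$, $\delta_1\ge\delta_2\ge2$ are integers, and for $i=1,2$ and each $\iota\in\mathcal{T}_i$ there is $S_\iota\subseteq\mathcal{T}_i$ with $\iota\in S_\iota$, $\delta_i\le|S_\iota|\le r_i+\delta_i-1$, such that for every $E\subseteq S_\iota$ with $|E|=\delta_i-1$ and every $j\in E$, $(S_\iota\setminus E)\cup\{j\}\in\mathcal{R}_j$. *)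

theory Defs
  imports Complex_Main
begin

text \<open>A linear code of length n and dimension k over a finite field 'a is given by a
  k x n generator matrix G: entry G r i for row r < k and coordinate i in {1..n}.
  The column g_i is the vector (G r i) for r < k.\<close>

definition codeword :: "(nat \<Rightarrow> nat \<Rightarrow> 'a::field) \<Rightarrow> nat \<Rightarrow> (nat \<Rightarrow> 'a) \<Rightarrow> nat \<Rightarrow> 'a" where
  "codeword G k m i = (\<Sum>r<k. m r * G r i)"

definition full_rank :: "(nat \<Rightarrow> nat \<Rightarrow> 'a::field) \<Rightarrow> nat \<Rightarrow> nat \<Rightarrow> bool" where
  "full_rank G k n = (\<forall>m. (\<forall>i\<in>{1..n}. codeword G k m i = 0) \<longrightarrow> (\<forall>r<k. m r = 0))"

definition min_dist :: "(nat \<Rightarrow> nat \<Rightarrow> 'a::field) \<Rightarrow> nat \<Rightarrow> nat \<Rightarrow> nat" where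
  "min_dist G k n = Min {card {i\<in>{1..n}. codeword G k m i \<noteq> 0} | m.
                           \<exists>i\<in>{1..n}. codeword G k m i \<noteq> 0}"

definition lin_comb_of :: "(nat \<Rightarrow> nat \<Rightarrow> 'a::field) \<Rightarrow> nat \<Rightarrow> nat \<Rightarrow> nat set \<Rightarrow> bool" where
  "lin_comb_of G k i S = (\<exists>a. \<forall>r<k. G r i = (\<Sum>j\<in>S. a j * G r j))"

definition regenerating_set :: "(nat \<Rightarrow> nat \<Rightarrow> 'a::field) \<Rightarrow> nat \<Rightarrow> nat \<Rightarrow> nat \<Rightarrow> nat set \<Rightarrow> bool" where
  "regenerating_set G k n i R =
     (R \<subseteq> {1..n} \<and> i \<in> R \<and> lin_comb_of G k i (R - {i}) \<and>
      (\<forall>S. S \<subset> R - {i} \<longrightarrow> \<not> lin_comb_of G k i S))"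

definition locality_on :: "(nat \<Rightarrow> nat \<Rightarrow> 'a::field) \<Rightarrow> nat \<Rightarrow> nat \<Rightarrow> nat set \<Rightarrow> nat \<Rightarrow> nat \<Rightarrow> bool" where
  "locality_on G k n T r \<delta> =
     (\<forall>\<iota>\<in>T. \<exists>S. S \<subseteq> T \<and> \<iota> \<in> S \<and> \<delta> \<le> card S \<and> card S \<le> r + \<delta> - 1 \<and>
        (\<forall>E. E \<subseteq> S \<and> card E = \<delta> - 1 \<longrightarrow>
              (\<forall>j\<in>E. regenerating_set G k n j ((S - E) \<union> {j}))))"

definition two_localities :: "(nat \<Rightarrow> nat \<Rightarrow> 'a::field) \<Rightarrow> nat \<Rightarrow> nat \<Rightarrow> nat set \<Rightarrow>
     nat \<Rightarrow> nat \<Rightarrow> nat \<Rightarrow> nat \<Rightarrow> bool" where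
  "two_localities G k n T1 r1 \<delta>1 r2 \<delta>2 =
     (T1 \<subseteq> {1..n} \<and> r1 \<le> r2 \<and> \<delta>1 \<ge> \<delta>2 \<and> \<delta>2 \<ge> 2 \<and>
      locality_on G k n T1 r1 \<delta>1 \<and> locality_on G k n ({1..n} - T1) r2 \<delta>2)"

end

theory Submission
  imports Defs "HOL-Library.FuncSet" "HOL-Library.Cardinality"
begin

text \<open>Track a set U of coordinates together with a bound t on the codimension of the space of
  messages whose codewords vanish on U. Adding a local group S that meets the support of this
  space raises the codimension by at most r, because any \<delta> - 1 coordinates of S are determined
  by the others, while U gains \<delta> - 1 more coordinates than that. Taking \<lceil>n1/(r1+\<delta>1-1)\<rceil> groups
  inside T1 and then \<lceil>(k - r1 \<lceil>n1/(r1+\<delta>1-1)\<rceil>)/r2\<rceil> - 1 arbitrary groups keeps the codimension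
  below k. Completing U one coordinate at a time, as in the Singleton bound, then produces a
  nonzero codeword vanishing on k - 1 coordinates plus the accumulated surplus.\<close>

definition messages :: "nat \<Rightarrow> (nat \<Rightarrow> 'a::zero) set" where
  "messages k = {m. \<forall>r. k \<le> r \<longrightarrow> m r = 0}"

definition kernel_on :: "(nat \<Rightarrow> nat \<Rightarrow> 'a::field) \<Rightarrow> nat \<Rightarrow> nat set \<Rightarrow> (nat \<Rightarrow> 'a) set" where
  "kernel_on G k U = {m \<in> messages k. \<forall>i\<in>U. codeword G k m i = 0}"

text \<open>The kernel has dimension at least k - t, stated by counting to avoid truncated subtraction.\<close>
definition codim_le :: "(nat \<Rightarrow> nat \<Rightarrow> 'a::{finite,field}) \<Rightarrow> nat \<Rightarrow> nat set \<Rightarrow> nat \<Rightarrow> bool" where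
  "codim_le G k U t \<longleftrightarrow> CARD('a) ^ k \<le> CARD('a) ^ t * card (kernel_on G k U)"

definition local_group :: "(nat \<Rightarrow> nat \<Rightarrow> 'a::field) \<Rightarrow> nat \<Rightarrow> nat set \<Rightarrow> nat \<Rightarrow> nat \<Rightarrow> bool" where
  "local_group G k S r \<delta> \<longleftrightarrow> finite S \<and> \<delta> \<le> card S \<and> card S \<le> r + \<delta> - 1 \<and>
     (\<forall>E. E \<subseteq> S \<and> card E = \<delta> - 1 \<longrightarrow> kernel_on G k (S - E) \<subseteq> kernel_on G k S)"

lemma messages_eq_image_PiE:
  "messages k = (\<lambda>f r. if r < k then f r else 0) ` ({..<k} \<rightarrow>\<^sub>E (UNIV :: 'a::zero set))"
proof (intro equalityI subsetI)
  fix m :: "nat \<Rightarrow> 'a" assume "m \<in> messages k"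
  then have "m = (\<lambda>f r. if r < k then f r else 0) (restrict m {..<k})"
    by (auto simp: messages_def fun_eq_iff)
  moreover have "restrict m {..<k} \<in> {..<k} \<rightarrow>\<^sub>E UNIV"
    by simp
  ultimately show "m \<in> (\<lambda>f r. if r < k then f r else 0) ` ({..<k} \<rightarrow>\<^sub>E UNIV)"
    by (rule image_eqI)
next
  fix m :: "nat \<Rightarrow> 'a"
  assume "m \<in> (\<lambda>f r. if r < k then f r else 0) ` ({..<k} \<rightarrow>\<^sub>E UNIV)"
  then show "m \<in> messages k"
    unfolding messages_def by force
qed

lemma card_messages: "card (messages k :: (nat \<Rightarrow> 'a::{finite,zero}) set) = CARD('a) ^ k"
proof -
  have "inj_on (\<lambda>f r. if r < k then f r else (0::'a)) ({..<k} \<rightarrow>\<^sub>E UNIV)"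
  proof (rule inj_onI, rule ext)
    fix f g :: "nat \<Rightarrow> 'a" and x
    assume f: "f \<in> {..<k} \<rightarrow>\<^sub>E UNIV" and g: "g \<in> {..<k} \<rightarrow>\<^sub>E UNIV"
      and eq: "(\<lambda>r. if r < k then f r else 0) = (\<lambda>r. if r < k then g r else 0)"
    show "f x = g x"
      using fun_cong[OF eq, of x] PiE_arb[OF f, of x] PiE_arb[OF g, of x] by (cases "x < k") auto
  qed
  then show ?thesis
    by (simp add: messages_eq_image_PiE card_image card_PiE)
qed

lemma finite_kernel_on: "finite (kernel_on G k U :: (nat \<Rightarrow> 'a::{finite,field}) set)"
proof -
  have "finite (messages k :: (nat \<Rightarrow> 'a) set)"
    by (simp add: messages_eq_image_PiE finite_PiE)
  then show ?thesis
    unfolding kernel_on_def by simp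
qed

lemma codim_le_empty: "codim_le G k {} 0"
  by (simp add: codim_le_def kernel_on_def card_messages)

lemma codim_le_kernel_on_mono:
  "codim_le G k U t \<Longrightarrow> kernel_on G k U \<subseteq> kernel_on G k V \<Longrightarrow> codim_le G k V t"
  unfolding codim_le_def using card_mono[OF finite_kernel_on] by (meson le_trans mult_le_mono2)

lemma codeword_diff: "codeword G k (m - m') i = codeword G k m i - codeword G k m' i"
  unfolding codeword_def by (simp add: left_diff_distrib sum_subtractf)

lemma kernel_on_diff: "m \<in> kernel_on G k U \<Longrightarrow> m' \<in> kernel_on G k U \<Longrightarrow> m - m' \<in> kernel_on G k U"
  unfolding kernel_on_def messages_def by (auto simp: codeword_diff)

lemma kernel_on_antimono: "U \<subseteq> V \<Longrightarrow> kernel_on G k V \<subseteq> kernel_on G k U"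
  unfolding kernel_on_def by auto

lemma kernel_on_Un: "kernel_on G k (U \<union> V) = kernel_on G k U \<inter> kernel_on G k V"
  unfolding kernel_on_def by auto

text \<open>Subtracting a fixed preimage of each value of the i-th coordinate maps kernel_on G k U
  injectively into the kernel on insert i U times the field.\<close>
lemma card_kernel_on_le_insert:
  fixes G :: "nat \<Rightarrow> nat \<Rightarrow> 'a::{finite,field}"
  shows "card (kernel_on G k U) \<le> CARD('a) * card (kernel_on G k (insert i U))"
proof -
  define K where "K = kernel_on G k U"
  define K' where "K' = kernel_on G k (insert i U)"
  define p where "p c = (SOME m. m \<in> K \<and> codeword G k m i = c)" for c
  define f where "f m = (m - p (codeword G k m i), codeword G k m i)" for m
  have p: "p (codeword G k m i) \<in> K \<and> codeword G k (p (codeword G k m i)) i = codeword G k m i"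
    if "m \<in> K" for m
    unfolding p_def by (rule someI[of _ m]) (use that in auto)
  have "inj_on f K"
  proof (rule inj_onI)
    fix x y assume "f x = f y"
    then have diff: "x - p (codeword G k x i) = y - p (codeword G k y i)"
      and "codeword G k x i = codeword G k y i"
      unfolding f_def by (metis fst_conv, metis snd_conv)
    show "x = y"
    proof
      fix r
      show "x r = y r"
        using fun_cong[OF diff, of r] \<open>codeword G k x i = codeword G k y i\<close> by simp
    qed
  qed
  moreover have "f m \<in> K' \<times> UNIV" if "m \<in> K" for m
  proof -
    from that have "m - p (codeword G k m i) \<in> K" and "codeword G k (m - p (codeword G k m i)) i = 0"
      using kernel_on_diff[of m G k U] p[of m] unfolding K_def by (auto simp: codeword_diff)
    then show ?thesis
      unfolding f_def K_def K'_def kernel_on_def by auto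
  qed
  ultimately have "card K \<le> card (K' \<times> (UNIV :: 'a set))"
    using finite_kernel_on[of G k "insert i U"] unfolding K'_def
    by (intro card_inj_on_le) (auto simp: image_subset_iff)
  then show ?thesis
    by (simp add: K_def K'_def card_cartesian_product mult.commute)
qed

lemma codim_le_insert:
  assumes "codim_le G k U t"
  shows "codim_le G k (insert i U) (Suc t)"
proof -
  have "CARD('a) ^ k \<le> CARD('a) ^ t * card (kernel_on G k U)"
    using assms unfolding codim_le_def .
  also have "\<dots> \<le> CARD('a) ^ t * (CARD('a) * card (kernel_on G k (insert i U)))"
    using card_kernel_on_le_insert by (rule mult_le_mono2)
  finally show ?thesis
    unfolding codim_le_def by (simp add: algebra_simps)
qed

lemma codim_le_Un: "finite B \<Longrightarrow> codim_le G k U t \<Longrightarrow> codim_le G k (U \<union> B) (t + card B)"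
proof (induction B rule: finite_induct)
  case (insert i B)
  then have "codim_le G k (insert i (U \<union> B)) (Suc (t + card B))"
    by (intro codim_le_insert) simp
  with insert.hyps show ?case
    by simp
qed simp

subsection \<open>Local groups\<close>

lemma codeword_eq_0_if_lin_comb_of:
  assumes "lin_comb_of G k j T" and "m \<in> kernel_on G k T"
  shows "codeword G k m j = 0"
proof -
  obtain a where a: "\<forall>r<k. G r j = (\<Sum>l\<in>T. a l * G r l)"
    using assms(1) unfolding lin_comb_of_def by auto
  have "codeword G k m j = (\<Sum>r<k. m r * (\<Sum>l\<in>T. a l * G r l))"
    unfolding codeword_def using a by simp
  also have "\<dots> = (\<Sum>l\<in>T. a l * codeword G k m l)"
    unfolding codeword_def
    by (simp add: sum_distrib_left sum_distrib_right mult.assoc mult.left_commute sum.swap[of _ T])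
  also have "\<dots> = 0"
    using assms(2) unfolding kernel_on_def by simp
  finally show ?thesis .
qed

lemma locality_on_local_group:
  assumes "locality_on G k n T r \<delta>" and "1 \<le> \<delta>" and "\<iota> \<in> T"
  obtains S where "S \<subseteq> T" and "\<iota> \<in> S" and "local_group G k S r \<delta>"
proof -
  have "\<exists>S. S \<subseteq> T \<and> \<iota> \<in> S \<and> \<delta> \<le> card S \<and> card S \<le> r + \<delta> - 1 \<and>
          (\<forall>E. E \<subseteq> S \<and> card E = \<delta> - 1 \<longrightarrow> (\<forall>j\<in>E. regenerating_set G k n j ((S - E) \<union> {j})))"
    using assms(1,3) unfolding locality_on_def by (rule bspec)
  then obtain S where S: "S \<subseteq> T" "\<iota> \<in> S" "\<delta> \<le> card S" "card S \<le> r + \<delta> - 1"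
    and regen: "\<forall>E. E \<subseteq> S \<and> card E = \<delta> - 1 \<longrightarrow> (\<forall>j\<in>E. regenerating_set G k n j ((S - E) \<union> {j}))"
    by blast
  have "finite S"
    using S(3) assms(2) card.infinite by force
  have "kernel_on G k (S - E) \<subseteq> kernel_on G k S" if "E \<subseteq> S" "card E = \<delta> - 1" for E
  proof
    fix m assume m: "m \<in> kernel_on G k (S - E)"
    have "codeword G k m j = 0" if "j \<in> E" for j
    proof -
      have "regenerating_set G k n j ((S - E) \<union> {j})"
        using regen \<open>E \<subseteq> S\<close> \<open>card E = \<delta> - 1\<close> \<open>j \<in> E\<close> by blast
      moreover have "((S - E) \<union> {j}) - {j} = S - E"
        using \<open>j \<in> E\<close> by auto
      ultimately have "lin_comb_of G k j (S - E)"
        unfolding regenerating_set_def by simp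
      then show ?thesis
        using m by (rule codeword_eq_0_if_lin_comb_of)
    qed
    then show "m \<in> kernel_on G k S"
      using m unfolding kernel_on_def by blast
  qed
  then have "local_group G k S r \<delta>"
    unfolding local_group_def using S(3,4) \<open>finite S\<close> by blast
  with S(1,2) show thesis
    by (rule that)
qed

lemma two_localities_local_group:
  assumes "two_localities G k n T1 r1 \<delta>1 r2 \<delta>2" and "i \<in> {1..n}"
  obtains S r \<delta> where "S \<subseteq> {1..n}" and "i \<in> S" and "local_group G k S r \<delta>"
    and "r \<le> r2" and "\<delta>2 \<le> \<delta>"
proof -
  have "T1 \<subseteq> {1..n}" "r1 \<le> r2" "\<delta>2 \<le> \<delta>1" "1 \<le> \<delta>2"
    and loc1: "locality_on G k n T1 r1 \<delta>1" and loc2: "locality_on G k n ({1..n} - T1) r2 \<delta>2"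
    using assms(1) unfolding two_localities_def by auto
  show thesis
  proof (cases "i \<in> T1")
    case True
    then obtain S where "S \<subseteq> T1" "i \<in> S" "local_group G k S r1 \<delta>1"
      using locality_on_local_group[OF loc1] \<open>\<delta>2 \<le> \<delta>1\<close> \<open>1 \<le> \<delta>2\<close> by (metis le_trans)
    with \<open>T1 \<subseteq> {1..n}\<close> \<open>r1 \<le> r2\<close> \<open>\<delta>2 \<le> \<delta>1\<close> show thesis
      by (intro that[of S r1 \<delta>1]) auto
  next
    case False
    with assms(2) obtain S where "S \<subseteq> {1..n} - T1" "i \<in> S" "local_group G k S r2 \<delta>2"
      using locality_on_local_group[OF loc2 \<open>1 \<le> \<delta>2\<close>] by blast
    then show thesis
      by (intro that[of S r2 \<delta>2]) auto
  qed
qed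

text \<open>If some message vanishing on U is nonzero at a coordinate of the local group S, then at
  least \<delta> - 1 coordinates of S are new, and these are forced to vanish once the remaining new
  ones do.\<close>
lemma codim_le_Un_local_group:
  fixes G :: "nat \<Rightarrow> nat \<Rightarrow> 'a::{finite,field}"
  assumes "finite U" and "codim_le G k U t" and S: "local_group G k S r \<delta>"
    and "s \<in> S" and m: "m \<in> kernel_on G k U" "codeword G k m s \<noteq> 0"
  obtains a where "a \<le> r" and "codim_le G k (U \<union> S) (t + a)"
    and "card (U \<union> S) = card U + a + (\<delta> - 1)"
proof -
  have "finite S" and card_S: "\<delta> \<le> card S" "card S \<le> r + \<delta> - 1"
    and forced: "\<And>E. E \<subseteq> S \<Longrightarrow> card E = \<delta> - 1 \<Longrightarrow> kernel_on G k (S - E) \<subseteq> kernel_on G k S"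
    using S unfolding local_group_def by blast+
  define A where "A = S - U"
  have "finite A" "A \<subseteq> S"
    using \<open>finite S\<close> by (auto simp: A_def)
  have card_US: "card (U \<union> S) = card U + card A"
    using \<open>finite U\<close> \<open>finite A\<close> by (simp add: A_def card_Un_disjoint[symmetric])
  have "\<delta> - 1 \<le> card A"
  proof (rule ccontr)
    assume "\<not> \<delta> - 1 \<le> card A"
    moreover have "card (S - A) = card S - card A"
      using \<open>finite A\<close> \<open>A \<subseteq> S\<close> by (rule card_Diff_subset)
    ultimately have "\<delta> - 1 - card A \<le> card (S - A)"
      using card_S by linarith
    then obtain E' where E': "E' \<subseteq> S - A" "card E' = \<delta> - 1 - card A"
      by (rule obtain_subset_with_card_n)
    have "finite E'"
      using E'(1) \<open>finite S\<close> finite_subset by blast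
    have "A \<union> E' \<subseteq> S"
      using E'(1) \<open>A \<subseteq> S\<close> by auto
    moreover have "card (A \<union> E') = \<delta> - 1"
      using E' \<open>finite A\<close> \<open>finite E'\<close> \<open>\<not> \<delta> - 1 \<le> card A\<close>
      by (subst card_Un_disjoint) auto
    moreover have "S - (A \<union> E') \<subseteq> U"
      by (auto simp: A_def)
    ultimately have "m \<in> kernel_on G k S"
      using forced kernel_on_antimono m(1) by blast
    with m(2) \<open>s \<in> S\<close> show False
      unfolding kernel_on_def by blast
  qed
  then obtain E where E: "E \<subseteq> A" "card E = \<delta> - 1"
    by (rule obtain_subset_with_card_n)
  define B where "B = A - E"
  have "finite B" and card_B: "card B = card A - (\<delta> - 1)"
    using \<open>finite A\<close> E by (auto simp: B_def card_Diff_subset finite_subset)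
  have "kernel_on G k (U \<union> B) \<subseteq> kernel_on G k U \<inter> kernel_on G k (S - E)"
    by (intro Int_greatest kernel_on_antimono) (auto simp: A_def B_def)
  also have "\<dots> \<subseteq> kernel_on G k (U \<union> S)"
    using forced[of E] E \<open>A \<subseteq> S\<close> by (auto simp: kernel_on_Un)
  finally have "codim_le G k (U \<union> S) (t + card B)"
    using codim_le_Un[OF \<open>finite B\<close> assms(2)] by (rule codim_le_kernel_on_mono[rotated])
  moreover have "card B \<le> r"
    using card_B card_S card_mono[OF \<open>finite S\<close> \<open>A \<subseteq> S\<close>] by linarith
  moreover have "card (U \<union> S) = card U + card B + (\<delta> - 1)"
    using card_US card_B \<open>\<delta> - 1 \<le> card A\<close> by linarith
  ultimately show thesis
    using that by blast
qed

subsection \<open>A Singleton-type bound\<close>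

lemma card_UNIV_field_ge_2: "2 \<le> CARD('a::{finite,field})"
proof -
  have "card {0::'a, 1} \<le> CARD('a)"
    by (rule card_mono) auto
  then show ?thesis
    by simp
qed

lemma codim_le_nonzero_codeword:
  fixes G :: "nat \<Rightarrow> nat \<Rightarrow> 'a::{finite,field}"
  assumes rank: "full_rank G k n" and "codim_le G k U t" and "t < k"
  obtains m i where "m \<in> kernel_on G k U" and "i \<in> {1..n}" and "codeword G k m i \<noteq> 0"
proof -
  have "CARD('a) ^ t * CARD('a) \<le> CARD('a) ^ k"
    using \<open>t < k\<close> card_UNIV_field_ge_2[where 'a='a]
    by (metis Suc_leI one_le_numeral order_trans power_Suc2 power_increasing)
  with \<open>codim_le G k U t\<close> have "CARD('a) ^ t * CARD('a) \<le> CARD('a) ^ t * card (kernel_on G k U)"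
    unfolding codim_le_def by linarith
  then have "CARD('a) \<le> card (kernel_on G k U)"
    by simp
  then have "\<not> kernel_on G k U \<subseteq> {\<lambda>_. 0}"
    using card_UNIV_field_ge_2[where 'a='a] card_mono[of "{\<lambda>_. 0}" "kernel_on G k U"] by auto
  then obtain m r where m: "m \<in> kernel_on G k U" and "m r \<noteq> 0"
    by (auto simp: fun_eq_iff)
  moreover from m \<open>m r \<noteq> 0\<close> have "r < k"
    unfolding kernel_on_def messages_def using not_less by blast
  ultimately obtain i where "i \<in> {1..n}" "codeword G k m i \<noteq> 0"
    using rank unfolding full_rank_def by blast
  with m show thesis
    by (rule that)
qed

lemma min_dist_le_weight:
  assumes "i \<in> {1..n}" and "codeword G k m i \<noteq> 0"
  shows "min_dist G k n \<le> card {i \<in> {1..n}. codeword G k m i \<noteq> 0}"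
proof -
  let ?D = "{card {i \<in> {1..n}. codeword G k m i \<noteq> 0} | m. \<exists>i\<in>{1..n}. codeword G k m i \<noteq> 0}"
  have "?D \<subseteq> {..n}"
  proof
    fix x assume "x \<in> ?D"
    then obtain m' where "x = card {i \<in> {1..n}. codeword G k m' i \<noteq> 0}"
      by blast
    moreover have "card {i \<in> {1..n}. codeword G k m' i \<noteq> 0} \<le> card {1..n}"
      by (rule card_mono) auto
    ultimately show "x \<in> {..n}"
      by simp
  qed
  then have "finite ?D"
    by (rule finite_subset) simp
  moreover have "card {i \<in> {1..n}. codeword G k m i \<noteq> 0} \<in> ?D"
    using assms by blast
  ultimately show ?thesis
    unfolding min_dist_def by (rule Min_le)
qed

lemma codim_le_singleton_bound:
  fixes G :: "nat \<Rightarrow> nat \<Rightarrow> 'a::{finite,field}"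
  assumes rank: "full_rank G k n"
  shows "finite U \<Longrightarrow> U \<subseteq> {1..n} \<Longrightarrow> codim_le G k U t \<Longrightarrow> t < k \<Longrightarrow>
    min_dist G k n + card U + (k - 1) \<le> n + t"
proof (induction "k - 1 - t" arbitrary: U t)
  case 0
  obtain m i where m: "m \<in> kernel_on G k U" and "i \<in> {1..n}" "codeword G k m i \<noteq> 0"
    using codim_le_nonzero_codeword[OF rank 0(4,5)] .
  have "{i \<in> {1..n}. codeword G k m i \<noteq> 0} \<subseteq> {1..n} - U"
    using m unfolding kernel_on_def by auto
  then have "card {i \<in> {1..n}. codeword G k m i \<noteq> 0} \<le> n - card U"
    using card_mono[of "{1..n} - U"] card_Diff_subset[OF 0(2,3)] by simp
  moreover have "card U \<le> n"
    using card_mono[OF _ 0(3)] by simp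
  ultimately show ?case
    using min_dist_le_weight[OF \<open>i \<in> {1..n}\<close> \<open>codeword G k m i \<noteq> 0\<close>] 0(1,5) by linarith
next
  case (Suc s)
  obtain m i where m: "m \<in> kernel_on G k U" and i: "i \<in> {1..n}" "codeword G k m i \<noteq> 0"
    using codim_le_nonzero_codeword[OF rank Suc(5,6)] .
  then have "i \<notin> U"
    unfolding kernel_on_def by auto
  have "min_dist G k n + card (insert i U) + (k - 1) \<le> n + Suc t"
    using Suc i codim_le_insert[OF Suc(5)] by (intro Suc.hyps) auto
  with \<open>i \<notin> U\<close> \<open>finite U\<close> show ?case
    by simp
qed

subsection \<open>Greedy choice of local groups\<close>

lemma codim_le_locality_groups:
  fixes G :: "nat \<Rightarrow> nat \<Rightarrow> 'a::{finite,field}"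
  assumes "T \<subseteq> {1..n}" and loc: "locality_on G k n T r \<delta>" and "1 \<le> \<delta>" and "j \<le> m"
    and room: "\<And>i. i < m \<Longrightarrow> r * i + m * (\<delta> - 1) \<le> card T"
  shows "\<exists>U t. finite U \<and> U \<subseteq> {1..n} \<and> codim_le G k U t \<and> t \<le> r * j \<and> t + j * (\<delta> - 1) \<le> card U"
  using \<open>j \<le> m\<close>
proof (induction j)
  case 0
  show ?case
    using codim_le_empty by fastforce
next
  case (Suc j)
  then obtain U t where U: "finite U" "U \<subseteq> {1..n}" "codim_le G k U t"
    and t: "t \<le> r * j" "t + j * (\<delta> - 1) \<le> card U"
    by auto
  have "finite T"
    using \<open>T \<subseteq> {1..n}\<close> finite_subset by blast
  show ?case
  proof (cases "\<exists>s\<in>T. \<exists>m0\<in>kernel_on G k U. codeword G k m0 s \<noteq> 0")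
    case True
    then obtain s m0 where "s \<in> T" "m0 \<in> kernel_on G k U" "codeword G k m0 s \<noteq> 0"
      by blast
    moreover obtain S where "S \<subseteq> T" "s \<in> S" "local_group G k S r \<delta>"
      using locality_on_local_group[OF loc \<open>1 \<le> \<delta>\<close> \<open>s \<in> T\<close>] .
    ultimately obtain a where "a \<le> r" "codim_le G k (U \<union> S) (t + a)"
      "card (U \<union> S) = card U + a + (\<delta> - 1)"
      using codim_le_Un_local_group[OF U(1,3)] by metis
    moreover have "finite (U \<union> S)" "U \<union> S \<subseteq> {1..n}"
      using U \<open>S \<subseteq> T\<close> \<open>T \<subseteq> {1..n}\<close> \<open>finite T\<close> finite_subset by auto
    ultimately show ?thesis
      using t by (intro exI[of _ "U \<union> S"] exI[of _ "t + a"]) auto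
  next
    case False
    then have "kernel_on G k U \<subseteq> kernel_on G k (U \<union> T)"
      unfolding kernel_on_def by auto
    then have "codim_le G k (U \<union> T) t"
      by (rule codim_le_kernel_on_mono[OF U(3)])
    moreover have "t + Suc j * (\<delta> - 1) \<le> card (U \<union> T)"
    proof -
      have "Suc j * (\<delta> - 1) \<le> m * (\<delta> - 1)"
        using Suc.prems by (rule mult_le_mono1)
      moreover have "r * j + m * (\<delta> - 1) \<le> card T"
        using Suc.prems by (intro room) simp
      moreover have "card T \<le> card (U \<union> T)"
        using U(1) \<open>finite T\<close> by (simp add: card_mono)
      ultimately show ?thesis
        using t(1) by linarith
    qed
    moreover have "finite (U \<union> T)" "U \<union> T \<subseteq> {1..n}"
      using U \<open>finite T\<close> \<open>T \<subseteq> {1..n}\<close> by auto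
    ultimately show ?thesis
      using t(1) by (intro exI[of _ "U \<union> T"] exI[of _ t]) auto
  qed
qed

lemma codim_le_two_localities_groups:
  fixes G :: "nat \<Rightarrow> nat \<Rightarrow> 'a::{finite,field}"
  assumes rank: "full_rank G k n" and loc: "two_localities G k n T1 r1 \<delta>1 r2 \<delta>2"
    and U0: "finite U0" "U0 \<subseteq> {1..n}" "codim_le G k U0 t0"
  shows "t0 + r2 * L < k \<Longrightarrow> \<exists>U t. finite U \<and> U \<subseteq> {1..n} \<and> codim_le G k U t \<and>
    t \<le> t0 + r2 * L \<and> card U0 + t + L * (\<delta>2 - 1) \<le> card U + t0"
proof (induction L)
  case 0
  show ?case
    using U0 by auto
next
  case (Suc L)
  then obtain U t where U: "finite U" "U \<subseteq> {1..n}" "codim_le G k U t"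
    and t: "t \<le> t0 + r2 * L" "card U0 + t + L * (\<delta>2 - 1) \<le> card U + t0"
    by auto
  have "t < k"
    using t(1) Suc.prems by simp
  then obtain m i where "m \<in> kernel_on G k U" "i \<in> {1..n}" "codeword G k m i \<noteq> 0"
    using codim_le_nonzero_codeword[OF rank U(3)] by metis
  moreover obtain S r \<delta> where "S \<subseteq> {1..n}" "i \<in> S" "local_group G k S r \<delta>" "r \<le> r2" "\<delta>2 \<le> \<delta>"
    using two_localities_local_group[OF loc \<open>i \<in> {1..n}\<close>] .
  ultimately obtain a where "a \<le> r" "codim_le G k (U \<union> S) (t + a)"
    "card (U \<union> S) = card U + a + (\<delta> - 1)"
    using codim_le_Un_local_group[OF U(1,3)] by metis
  moreover have "finite (U \<union> S)" "U \<union> S \<subseteq> {1..n}"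
    using U \<open>S \<subseteq> {1..n}\<close> finite_subset by auto
  ultimately show ?case
    using t \<open>r \<le> r2\<close> \<open>\<delta>2 \<le> \<delta>\<close> by (intro exI[of _ "U \<union> S"] exI[of _ "t + a"]) auto
qed

lemma min_dist_two_localities_bound:
  fixes G :: "nat \<Rightarrow> nat \<Rightarrow> 'a::{finite,field}"
  assumes rank: "full_rank G k n" and loc: "two_localities G k n T1 r1 \<delta>1 r2 \<delta>2"
    and room: "\<And>i. i < m \<Longrightarrow> r1 * i + m * (\<delta>1 - 1) \<le> card T1"
    and budget: "r1 * m + r2 * L < k"
  shows "min_dist G k n + (k - 1) + m * (\<delta>1 - 1) + L * (\<delta>2 - 1) \<le> n"
proof -
  have "T1 \<subseteq> {1..n}" and loc1: "locality_on G k n T1 r1 \<delta>1" and "1 \<le> \<delta>1"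
    using loc unfolding two_localities_def by auto
  then obtain U0 t0 where U0: "finite U0" "U0 \<subseteq> {1..n}" "codim_le G k U0 t0"
    and t0: "t0 \<le> r1 * m" "t0 + m * (\<delta>1 - 1) \<le> card U0"
    using codim_le_locality_groups[OF \<open>T1 \<subseteq> {1..n}\<close> loc1 \<open>1 \<le> \<delta>1\<close> order_refl room]
    by blast
  have "t0 + r2 * L < k"
    using t0(1) budget by linarith
  then obtain U t where U: "finite U" "U \<subseteq> {1..n}" "codim_le G k U t"
    and t: "t \<le> t0 + r2 * L" "card U0 + t + L * (\<delta>2 - 1) \<le> card U + t0"
    using codim_le_two_localities_groups[OF rank loc U0] by blast
  have "t < k"
    using t(1) \<open>t0 + r2 * L < k\<close> by linarith
  have "min_dist G k n + card U + (k - 1) \<le> n + t"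
    using codim_le_singleton_bound[OF rank U \<open>t < k\<close>] .
  with t(2) t0(2) show ?thesis
    by linarith
qed

subsection \<open>The ceiling arithmetic\<close>

lemma le_ceiling_mult_minus_one_divide:
  assumes "2 \<le> \<delta>"
  shows "x - 1 \<le> \<lceil>(real_of_int (x * (int \<delta> - 1)) - 1) / real (\<delta> - 1)\<rceil>"
proof -
  define c where "c = real (\<delta> - 1)"
  have "1 \<le> c" and x: "real_of_int (x * (int \<delta> - 1)) = real_of_int x * c"
    using assms by (simp_all add: c_def of_nat_diff)
  then have "real_of_int (x - 1) * c \<le> real_of_int x * c - 1"
    by (simp add: algebra_simps)
  with \<open>1 \<le> c\<close> have "real_of_int (x - 1) \<le> (real_of_int (x * (int \<delta> - 1)) - 1) / c"
    unfolding x by (simp add: pos_le_divide_eq)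
  then show ?thesis
    unfolding c_def by (simp add: le_ceiling_iff)
qed

lemma ceiling_divide_minus_one_mult_less:
  assumes "0 < x" and "0 < r"
  shows "0 \<le> \<lceil>real_of_int x / real r\<rceil> - 1" and "(\<lceil>real_of_int x / real r\<rceil> - 1) * int r < x"
proof -
  have "0 < real_of_int x / real r"
    using assms by simp
  then show "0 \<le> \<lceil>real_of_int x / real r\<rceil> - 1"
    by linarith
  have "real_of_int (\<lceil>real_of_int x / real r\<rceil> - 1) < real_of_int x / real r"
    by linarith
  then have "real_of_int ((\<lceil>real_of_int x / real r\<rceil> - 1) * int r) < real_of_int x"
    using assms(2) by (simp add: pos_less_divide_eq)
  then show "(\<lceil>real_of_int x / real r\<rceil> - 1) * int r < x"
    by linarith
qed

lemma local_groups_fit_in_locality_set: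
  assumes "2 \<le> \<delta>" and "0 \<le> c" and "i < nat c"
    and "int r * \<lceil>(real_of_int (c * (int \<delta> - 1)) - 1) / real (\<delta> - 1)\<rceil>
           + (c * (int \<delta> - 1) - 1) < int N"
  shows "r * i + nat c * (\<delta> - 1) \<le> N"
proof -
  have "int r * int i \<le> int r * (c - 1)"
    using assms(3) by (intro mult_left_mono) linarith+
  also have "\<dots> \<le> int r * \<lceil>(real_of_int (c * (int \<delta> - 1)) - 1) / real (\<delta> - 1)\<rceil>"
    using le_ceiling_mult_minus_one_divide[OF assms(1)] by (rule mult_left_mono) simp
  finally have "int (r * i + nat c * (\<delta> - 1)) \<le> int N"
    using assms(1,2,4) by (simp add: of_nat_diff)
  then show ?thesis
    by (simp only: of_nat_le_iff)
qed

theorem theorem1: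
  fixes G :: "nat \<Rightarrow> nat \<Rightarrow> 'a::{finite,field}"
    and n k d r1 r2 \<delta>1 \<delta>2 n1 :: nat and T1 :: "nat set"
  assumes rank: "full_rank G k n"
    and dist: "d = min_dist G k n"
    and loc: "two_localities G k n T1 r1 \<delta>1 r2 \<delta>2"
    and r1pos: "1 \<le> r1"
    and n1: "n1 = card T1"
    and h1: "int r1 * \<lceil>real n1 / real (r1 + \<delta>1 - 1)\<rceil> \<le> int k - 1"
    and h2: "int r1 * \<lceil>(real_of_int (\<lceil>real n1 / real (r1 + \<delta>1 - 1)\<rceil> * (int \<delta>1 - 1)) - 1)
                        / real (\<delta>1 - 1)\<rceil>
             + (\<lceil>real n1 / real (r1 + \<delta>1 - 1)\<rceil> * (int \<delta>1 - 1) - 1) < int n1"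
  shows "int d \<le> int n - int k + 1 - \<lceil>real n1 / real (r1 + \<delta>1 - 1)\<rceil> * (int \<delta>1 - 1)
           - (\<lceil>real_of_int (int k - int r1 * \<lceil>real n1 / real (r1 + \<delta>1 - 1)\<rceil>) / real r2\<rceil> - 1)
             * (int \<delta>2 - 1)"
proof -
  have "r1 \<le> r2" "2 \<le> \<delta>2" "\<delta>2 \<le> \<delta>1"
    using loc unfolding two_localities_def by auto
  define c where "c = \<lceil>real n1 / real (r1 + \<delta>1 - 1)\<rceil>"
  define Y where "Y = \<lceil>real_of_int (int k - int r1 * c) / real r2\<rceil>"
  have "0 \<le> c"
    unfolding c_def zero_le_ceiling by (rule less_le_trans[of _ 0]) simp_all
  have "0 < int k - int r1 * c" "0 < r2"
    using h1 r1pos \<open>r1 \<le> r2\<close> by (simp_all add: c_def)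
  note Y = ceiling_divide_minus_one_mult_less[OF this, folded Y_def]
  have room: "r1 * i + nat c * (\<delta>1 - 1) \<le> card T1" if "i < nat c" for i
    using local_groups_fit_in_locality_set[of \<delta>1 c i r1 n1] h2 \<open>0 \<le> c\<close> that
      \<open>2 \<le> \<delta>2\<close> \<open>\<delta>2 \<le> \<delta>1\<close> unfolding c_def n1 by simp
  have "int (r1 * nat c + r2 * nat (Y - 1)) < int k"
    using Y \<open>0 \<le> c\<close> by (simp add: algebra_simps)
  then have budget: "r1 * nat c + r2 * nat (Y - 1) < k"
    by (simp only: of_nat_less_iff)
  have "d + (k - 1) + nat c * (\<delta>1 - 1) + nat (Y - 1) * (\<delta>2 - 1) \<le> n"
    unfolding dist using min_dist_two_localities_bound[OF rank loc room budget] .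
  then have "int (d + (k - 1) + nat c * (\<delta>1 - 1) + nat (Y - 1) * (\<delta>2 - 1)) \<le> int n"
    by (simp only: of_nat_le_iff)
  then have "int d + (int k - 1) + c * (int \<delta>1 - 1) + (Y - 1) * (int \<delta>2 - 1) \<le> int n"
    using budget \<open>0 \<le> c\<close> Y(1) \<open>2 \<le> \<delta>2\<close> \<open>\<delta>2 \<le> \<delta>1\<close> by (simp add: of_nat_diff)
  then show ?thesis
    unfolding c_def Y_def by linarith
qed

end
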